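(* Let $1 \leq p \leq q < \infty$ and let $\lambda, \mu, \nu, \alpha, \beta$ be real numbers with $\beta + 1 > -q\nu$. Let $\mathcal{H}_{\lambda,\mu,\nu}$ be the discrete Hilbert-type operator $$\mathcal{H}_{\lambda,\mu,\nu}(a)(n) = \sum_{m=1}^{\infty} \frac{m^{\mu} n^{\nu}}{(m+n)^{\lambda}} a_m, \quad n \in \mathbb{N},$$ acting on real sequences $a = \{a_m\}_{m=1}^\infty$. Then $\mathcal{H}_{\lambda,\mu,\nu}$ is bounded from $l^p_\alpha$ to $l^q_\beta$ if and only if $$\lambda \geq \mu + \nu + 1 + \frac{\beta+1}{q} - \frac{\alpha+1}{p} \quad \text{and} \quad \beta + 1 < q(\lambda - \nu).$$
   Context: For $1 \le p < \infty$ and $\theta \in \mathbb{R}$, $l^p_\theta$ denotes the space of real sequences $a=\{a_m\}_{m=1}^\infty$ with $\|a\|_{p,\theta} = \left(\sum_{m=1}^\infty m^\theta |a_m|^p\right)^{1/p} < \infty$. An operator $T$ is bounded from $l^p_\alpha$ to $l^q_\beta$ if for every $a \in l^p_\alpha$ the defining series converge, $Ta \in l^q_\beta$, and there is a constant $C$ with $\|Ta\|_{q,\beta} \le C \|a\|_{p,\alpha}$ for all $a \in l^p_\alpha$. *)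

theory Defs
  imports "HOL-Analysis.Analysis"
begin

text \<open>Real sequences a = (a_m), m >= 1, are represented as functions nat => real;
  the value at index 0 is ignored.\<close>

definition in_lw :: "real \<Rightarrow> real \<Rightarrow> (nat \<Rightarrow> real) \<Rightarrow> bool" where
  "in_lw p \<theta> a \<longleftrightarrow> summable (\<lambda>m. real (Suc m) powr \<theta> * \<bar>a (Suc m)\<bar> powr p)"

definition lw_norm :: "real \<Rightarrow> real \<Rightarrow> (nat \<Rightarrow> real) \<Rightarrow> real" where
  "lw_norm p \<theta> a = (\<Sum>m. real (Suc m) powr \<theta> * \<bar>a (Suc m)\<bar> powr p) powr (1 / p)"

definition hkernel :: "real \<Rightarrow> real \<Rightarrow> real \<Rightarrow> nat \<Rightarrow> nat \<Rightarrow> real" where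
  "hkernel lam \<mu> \<nu> m n = real m powr \<mu> * real n powr \<nu> / real (m + n) powr lam"

definition hilbert_op :: "real \<Rightarrow> real \<Rightarrow> real \<Rightarrow> (nat \<Rightarrow> real) \<Rightarrow> nat \<Rightarrow> real" where
  "hilbert_op lam \<mu> \<nu> a n = (\<Sum>m. hkernel lam \<mu> \<nu> (Suc m) n * a (Suc m))"

definition hilbert_bounded ::
  "real \<Rightarrow> real \<Rightarrow> real \<Rightarrow> real \<Rightarrow> real \<Rightarrow> real \<Rightarrow> real \<Rightarrow> bool" where
  "hilbert_bounded lam \<mu> \<nu> p \<alpha> q \<beta> \<longleftrightarrow>
     (\<forall>a. in_lw p \<alpha> a \<longrightarrow>
        (\<forall>n\<ge>1. summable (\<lambda>m. hkernel lam \<mu> \<nu> (Suc m) n * a (Suc m)))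
        \<and> in_lw q \<beta> (hilbert_op lam \<mu> \<nu> a))
     \<and> (\<exists>C. \<forall>a. in_lw p \<alpha> a \<longrightarrow>
            lw_norm q \<beta> (hilbert_op lam \<mu> \<nu> a) \<le> C * lw_norm p \<alpha> a)"

end

theory Submission
  imports Defs
begin

text \<open>Put \<open>x\<^sub>m = m^(\<alpha>/p) |a\<^sub>m|\<close>: the theorem becomes the boundedness from unweighted
  \<open>l\<^sup>p\<close> to \<open>l\<^sup>q\<close> of the kernel \<open>m^a n^b (m + n)^(-lam)\<close> with \<open>a = \<mu> - \<alpha>/p\<close>, \<open>b = \<nu> + \<beta>/q\<close>.
  Everything rests on \<open>\<Sum>\<^sub>n n^c (m + n)^d \<le> C m^(c + d + 1)\<close> for \<open>c > -1\<close>, \<open>c + d < -1\<close>.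
  For sufficiency, split the kernel into two such kernels and run Schur's test (Hoelder in \<open>m\<close>,
  then Jensen in \<open>n\<close>) on finite sections; the hypothesis and the two conditions are exactly what
  make both Schur sums finite, and the operator bound follows by letting the sections grow.
  For necessity, test on \<open>a\<^sub>m = m^(-s)\<close>, which lies in \<open>l\<^sup>p\<^sub>\<alpha>\<close> for every \<open>s > (\<alpha> + 1)/p\<close>:
  the single term \<open>m = 1\<close> gives \<open>(H a)\<^sub>n \<ge> c n^(\<nu> - lam)\<close>, the block \<open>n \<le> m < 2n\<close> gives
  \<open>(H a)\<^sub>n \<ge> c n^(\<mu> - s + \<nu> - lam + 1)\<close>, and summability of \<open>n^\<beta> (H a)\<^sub>n^q\<close> forces the second
  condition and, as \<open>s\<close> decreases to \<open>(\<alpha> + 1)/p\<close>, the first.\<close>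

section \<open>Sums of powers\<close>

lemma powr_le_of_comparable:
  fixes x y K e :: real
  assumes "0 < y" "y \<le> x" "x \<le> K * y"
  shows "x powr e \<le> K powr \<bar>e\<bar> * y powr e"
proof -
  define t where "t = x / y"
  have t1: "1 \<le> t" and tK: "t \<le> K" using assms by (auto simp: t_def field_simps)
  have "t powr e \<le> K powr \<bar>e\<bar>"
  proof (cases "e \<ge> 0")
    case True
    then show ?thesis using powr_mono2[of e t K] t1 tK by simp
  next
    case False
    have "t powr e \<le> 1" using False t1 powr_mono[of e 0 t] by simp
    also have "1 \<le> K powr \<bar>e\<bar>" using t1 tK by (simp add: ge_one_powr_ge_zero)
    finally show ?thesis .
  qed
  moreover have "x powr e = t powr e * y powr e" using assms by (simp add: t_def powr_divide)
  ultimately show ?thesis by (simp add: mult_right_mono)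
qed

lemma powr_ge_of_comparable:
  fixes x y K e :: real
  assumes "0 < y" "y \<le> x" "x \<le> K * y"
  shows "K powr (-\<bar>e\<bar>) * y powr e \<le> x powr e"
proof -
  define t where "t = x / y"
  have t1: "1 \<le> t" and tK: "t \<le> K" using assms by (auto simp: t_def field_simps)
  have "K powr (-\<bar>e\<bar>) \<le> t powr e"
  proof (cases "e \<ge> 0")
    case True
    have "K powr (-\<bar>e\<bar>) \<le> 1" using True t1 tK by (simp add: powr_minus_divide ge_one_powr_ge_zero)
    also have "1 \<le> t powr e" using True t1 by (simp add: ge_one_powr_ge_zero)
    finally show ?thesis .
  next
    case False
    have "K powr e \<le> t powr e" using False t1 tK by (intro powr_mono2') auto
    then show ?thesis using False by simp
  qed
  moreover have "x powr e = t powr e * y powr e" using assms by (simp add: t_def powr_divide)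
  ultimately show ?thesis by (simp add: mult_right_mono)
qed

text \<open>Mean value theorem for \<open>t powr (e + 1)\<close> on \<open>[x - 1, x]\<close>; \<open>t powr e\<close> decreases as \<open>e < 0\<close>.\<close>
lemma powr_le_difference_quotient:
  fixes e x :: real
  assumes "e < 0" "e \<noteq> -1" "1 < x"
  shows "x powr e \<le> (x powr (e + 1) - (x - 1) powr (e + 1)) / (e + 1)"
proof -
  have "\<And>t. x - 1 \<le> t \<Longrightarrow> t \<le> x \<Longrightarrow>
      ((\<lambda>a. a powr (e + 1)) has_real_derivative (e + 1) * t powr (e + 1 - 1)) (at t)"
    using assms by (intro has_real_derivative_powr) auto
  then have "\<exists>z. x - 1 < z \<and> z < x \<and>
      x powr (e + 1) - (x - 1) powr (e + 1) = (x - (x - 1)) * ((e + 1) * z powr (e + 1 - 1))"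
    by (intro MVT2) auto
  then obtain z where z: "x - 1 < z" "z < x"
      "x powr (e + 1) - (x - 1) powr (e + 1) = (e + 1) * z powr e"
    by auto
  have "x powr e \<le> z powr e" using z assms by (intro powr_mono2') auto
  also have "\<dots> = (x powr (e + 1) - (x - 1) powr (e + 1)) / (e + 1)"
    using z(3) assms(2) by (simp add: field_simps)
  finally show ?thesis .
qed

lemma sum_powr_le_telescope:
  fixes e :: real
  assumes "e < 0" "e \<noteq> -1" "1 \<le> m" "m \<le> Suc k"
  shows "(\<Sum>n\<in>{Suc m..Suc k}. real n powr e) \<le> (real (Suc k) powr (e + 1) - real m powr (e + 1)) / (e + 1)"
proof -
  have "(\<Sum>n\<in>{Suc m..Suc k}. real n powr e) = (\<Sum>i\<in>{m..k}. real (Suc i) powr e)"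
    by (rule sum.shift_bounds_cl_Suc_ivl)
  also have "\<dots> \<le> (\<Sum>i\<in>{m..k}. (real (Suc i) powr (e + 1) - real i powr (e + 1)) / (e + 1))"
  proof (rule sum_mono)
    fix i assume "i \<in> {m..k}"
    then show "real (Suc i) powr e \<le> (real (Suc i) powr (e + 1) - real i powr (e + 1)) / (e + 1)"
      using powr_le_difference_quotient[of e "real (Suc i)"] assms by auto
  qed
  also have "\<dots> = (real (Suc k) powr (e + 1) - real m powr (e + 1)) / (e + 1)"
    unfolding sum_divide_distrib[symmetric]
    using sum_Suc_diff[of m k "\<lambda>i. real i powr (e + 1)"] assms(4) by simp
  finally show ?thesis .
qed

lemma sum_powr_upto_le:
  fixes c :: real
  assumes "c > -1"
  obtains C where "C > 0" "\<And>m. m \<ge> 1 \<Longrightarrow> (\<Sum>n\<in>{1..m}. real n powr c) \<le> C * real m powr (c + 1)"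
proof (cases "c \<ge> 0")
  case True
  have "(\<Sum>n\<in>{1..m}. real n powr c) \<le> 1 * real m powr (c + 1)" if "m \<ge> 1" for m :: nat
  proof -
    have "(\<Sum>n\<in>{1..m}. real n powr c) \<le> (\<Sum>n\<in>{1..m}. real m powr c)"
      using True by (intro sum_mono powr_mono2) auto
    also have "\<dots> = real m powr (c + 1)" using that by (simp add: powr_add)
    finally show ?thesis by simp
  qed
  then show ?thesis using that[of 1] by simp
next
  case False
  have "(\<Sum>n\<in>{1..m}. real n powr c) \<le> (1 + 1 / (c + 1)) * real m powr (c + 1)"
    if "m \<ge> 1" for m :: nat
  proof -
    obtain k where m: "m = Suc k" using \<open>m \<ge> 1\<close> by (cases m) auto
    define X where "X = real m powr (c + 1)"
    have X1: "1 \<le> X" using that assms by (simp add: X_def ge_one_powr_ge_zero)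
    have "(\<Sum>n\<in>{1..m}. real n powr c) = 1 + (\<Sum>n\<in>{Suc 1..Suc k}. real n powr c)"
      unfolding m by (subst sum.atLeast_Suc_atMost) auto
    also have "\<dots> \<le> 1 + (X - 1) / (c + 1)"
      using sum_powr_le_telescope[of c 1 k] False assms by (simp add: X_def m)
    also have "\<dots> \<le> X + X / (c + 1)"
      using X1 assms by (intro add_mono divide_right_mono) auto
    also have "\<dots> = (1 + 1 / (c + 1)) * X"
      by (simp add: algebra_simps)
    finally show ?thesis by (simp add: X_def)
  qed
  moreover have "1 + 1 / (c + 1) > 0" using assms by (simp add: pos_add_strict)
  ultimately show ?thesis using that by blast
qed

lemma sum_powr_tail_le:
  fixes e :: real
  assumes "e < -1" "1 \<le> m"
  shows "(\<Sum>n\<in>{m<..N}. real n powr e) \<le> real m powr (e + 1) / (-(e + 1))"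
proof (cases "m < N")
  case False
  then show ?thesis using assms by simp
next
  case True
  then obtain k where N: "N = Suc k" and "m \<le> k" by (cases N) auto
  have "(\<Sum>n\<in>{m<..N}. real n powr e) = (\<Sum>n\<in>{Suc m..Suc k}. real n powr e)"
    by (simp add: N atLeastSucAtMost_greaterThanAtMost)
  also have "\<dots> \<le> (real (Suc k) powr (e + 1) - real m powr (e + 1)) / (e + 1)"
    using assms \<open>m \<le> k\<close> by (intro sum_powr_le_telescope) auto
  also have "\<dots> = (real m powr (e + 1) - real (Suc k) powr (e + 1)) / (-(e + 1))"
    by (metis minus_diff_eq minus_divide_divide)
  also have "\<dots> \<le> real m powr (e + 1) / (-(e + 1))"
    using assms by (intro divide_right_mono) auto
  finally show ?thesis .
qed

text \<open>Split at \<open>n = m\<close>: for \<open>n \<le> m\<close> the factor \<open>m + n\<close> is comparable to \<open>m\<close>, for \<open>n > m\<close> to \<open>n\<close>.\<close>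
lemma sum_powr_mixed_le:
  fixes c d :: real
  assumes "c > -1" "c + d < -1"
  obtains C where "C > 0"
    "\<And>m N. m \<ge> 1 \<Longrightarrow> (\<Sum>n\<in>{1..N}. real n powr c * real (m + n) powr d) \<le> C * real m powr (c + d + 1)"
proof -
  obtain C1 where C1: "C1 > 0" "\<And>m. m \<ge> 1 \<Longrightarrow> (\<Sum>n\<in>{1..m}. real n powr c) \<le> C1 * real m powr (c + 1)"
    using sum_powr_upto_le[OF assms(1)] by blast
  define C where "C = 2 powr \<bar>d\<bar> * (C1 + 1 / (-(c + d + 1)))"
  have "C > 0" unfolding C_def using C1 assms by (intro mult_pos_pos add_pos_pos) auto
  moreover have "(\<Sum>n\<in>{1..N}. real n powr c * real (m + n) powr d) \<le> C * real m powr (c + d + 1)"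
    if m: "m \<ge> 1" for m N :: nat
  proof -
    let ?f = "\<lambda>n. real n powr c * real (m + n) powr d"
    have "(\<Sum>n\<in>{1..N}. ?f n) \<le> (\<Sum>n\<in>{1..m} \<union> {m<..N}. ?f n)"
      by (intro sum_mono2) auto
    also have "\<dots> = (\<Sum>n\<in>{1..m}. ?f n) + (\<Sum>n\<in>{m<..N}. ?f n)"
      by (intro sum.union_disjoint) auto
    also have "(\<Sum>n\<in>{1..m}. ?f n) \<le> (\<Sum>n\<in>{1..m}. real n powr c * (2 powr \<bar>d\<bar> * real m powr d))"
      using m by (intro sum_mono mult_left_mono powr_le_of_comparable) auto
    also have "\<dots> = 2 powr \<bar>d\<bar> * real m powr d * (\<Sum>n\<in>{1..m}. real n powr c)"
      by (simp add: sum_distrib_left sum_distrib_right mult_ac)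
    also have "\<dots> \<le> 2 powr \<bar>d\<bar> * real m powr d * (C1 * real m powr (c + 1))"
      using C1(2)[OF m] by (intro mult_left_mono) auto
    also have "\<dots> = 2 powr \<bar>d\<bar> * C1 * real m powr (c + d + 1)"
    proof -
      have "c + d + 1 = d + (c + 1)" by simp
      then show ?thesis by (simp only: powr_add) (simp add: mult_ac)
    qed
    also have "(\<Sum>n\<in>{m<..N}. ?f n) \<le> (\<Sum>n\<in>{m<..N}. 2 powr \<bar>d\<bar> * real n powr (c + d))"
    proof (rule sum_mono)
      fix n assume n: "n \<in> {m<..N}"
      have "?f n \<le> real n powr c * (2 powr \<bar>d\<bar> * real n powr d)"
        using n m by (intro mult_left_mono powr_le_of_comparable) auto
      then show "?f n \<le> 2 powr \<bar>d\<bar> * real n powr (c + d)"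
        by (simp add: powr_add mult_ac)
    qed
    also have "\<dots> \<le> 2 powr \<bar>d\<bar> * (real m powr (c + d + 1) / (-(c + d + 1)))"
      unfolding sum_distrib_left[symmetric]
      using sum_powr_tail_le[of "c + d" m N] assms m by (intro mult_left_mono) auto
    finally show ?thesis unfolding C_def by (simp add: field_simps)
  qed
  ultimately show ?thesis using that by blast
qed

section \<open>Inequalities for finite sums\<close>

lemma weighted_power_mean_le:
  fixes w z :: "'a \<Rightarrow> real"
  assumes S: "finite S" and r: "r \<ge> 1"
    and w: "\<And>i. i \<in> S \<Longrightarrow> w i \<ge> 0" and z: "\<And>i. i \<in> S \<Longrightarrow> z i \<ge> 0"
  shows "(\<Sum>i\<in>S. w i * z i) powr r \<le> (\<Sum>i\<in>S. w i) powr (r - 1) * (\<Sum>i\<in>S. w i * z i powr r)"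
proof -
  define T where "T = {i\<in>S. w i > 0 \<and> z i > 0}"
  have TS: "T \<subseteq> S" and T: "finite T" using S by (auto simp: T_def)
  have zero: "w i = 0 \<or> z i = 0" if "i \<in> S - T" for i using that w z by (force simp: T_def)
  have h1: "(\<Sum>i\<in>S. w i * z i) = (\<Sum>i\<in>T. w i * z i)"
    using zero S TS by (intro sum.mono_neutral_right) auto
  have h2: "(\<Sum>i\<in>S. w i * z i powr r) = (\<Sum>i\<in>T. w i * z i powr r)"
    using zero S TS r by (intro sum.mono_neutral_right) auto
  have h3: "(\<Sum>i\<in>T. w i) \<le> (\<Sum>i\<in>S. w i)" using S TS w by (intro sum_mono2) auto
  show ?thesis
  proof (cases "T = {}")
    case True
    then show ?thesis using h1 w z by (simp add: sum_nonneg)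
  next
    case False
    define W where "W = (\<Sum>i\<in>T. w i)"
    have Wpos: "W > 0" unfolding W_def using False T by (intro sum_pos) (auto simp: T_def)
    have "(\<Sum>i\<in>T. (w i / W) *\<^sub>R z i) powr r \<le> (\<Sum>i\<in>T. (w i / W) * z i powr r)"
    proof (rule convex_on_sum[where C = "{0<..}"])
      show "convex_on {0<..} (\<lambda>x. x powr r)" using r by (rule powr_convex)
      show "(\<Sum>i\<in>T. w i / W) = 1" using Wpos by (simp add: W_def sum_divide_distrib[symmetric])
    qed (use T False Wpos in \<open>auto simp: T_def\<close>)
    then have "((\<Sum>i\<in>T. w i * z i) / W) powr r \<le> (\<Sum>i\<in>T. w i * z i powr r) / W"
      by (simp add: sum_divide_distrib)
    then have "(\<Sum>i\<in>T. w i * z i) powr r \<le> (\<Sum>i\<in>T. w i * z i powr r) / W * W powr r"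
      using Wpos TS w z by (simp add: powr_divide sum_nonneg field_simps)
    also have "\<dots> = W powr (r - 1) * (\<Sum>i\<in>T. w i * z i powr r)"
      using Wpos by (simp add: powr_diff)
    also have "\<dots> \<le> (\<Sum>i\<in>S. w i) powr (r - 1) * (\<Sum>i\<in>T. w i * z i powr r)"
      using h3 Wpos r TS w z unfolding W_def by (intro mult_right_mono powr_mono2 sum_nonneg) auto
    finally show ?thesis using h1 h2 by simp
  qed
qed

lemma Holder_sum_le:
  fixes f g :: "'a \<Rightarrow> real"
  assumes S: "finite S" and p: "p > 1"
    and f: "\<And>i. i \<in> S \<Longrightarrow> f i > 0" and g: "\<And>i. i \<in> S \<Longrightarrow> g i \<ge> 0"
  shows "(\<Sum>i\<in>S. f i * g i) powr p \<le> (\<Sum>i\<in>S. f i powr (p / (p - 1))) powr (p - 1) * (\<Sum>i\<in>S. g i powr p)"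
proof -
  define p' where "p' = p / (p - 1)"
  have p': "p' + (1 - p') * p = 0" using p unfolding p'_def by (simp add: field_simps)
  have "(\<Sum>i\<in>S. f i powr p' * (g i * f i powr (1 - p'))) powr p \<le>
      (\<Sum>i\<in>S. f i powr p') powr (p - 1) * (\<Sum>i\<in>S. f i powr p' * (g i * f i powr (1 - p')) powr p)"
    using S p f g by (intro weighted_power_mean_le) auto
  moreover have "f i powr p' * (g i * f i powr (1 - p')) = f i * g i" if "i \<in> S" for i
    using f[OF that] by (simp add: mult.left_commute flip: powr_add)
  moreover have "f i powr p' * (g i * f i powr (1 - p')) powr p = g i powr p" if "i \<in> S" for i
  proof -
    have "f i powr p' * (g i * f i powr (1 - p')) powr p = g i powr p * f i powr (p' + (1 - p') * p)"
      using f[OF that] g[OF that] by (simp add: powr_mult powr_powr powr_add)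
    then show ?thesis using p' f[OF that] by simp
  qed
  ultimately show ?thesis unfolding p'_def by (simp cong: sum.cong)
qed

text \<open>Jensen's inequality in \<open>m\<close> with weights \<open>y\<close>, then exchange the order of summation.\<close>
lemma sum_powr_weighted_sum_le:
  fixes c :: "'a \<Rightarrow> 'b \<Rightarrow> real" and y :: "'a \<Rightarrow> real"
  assumes M: "finite M" and N: "finite N" and r: "r \<ge> 1"
    and c: "\<And>m n. m \<in> M \<Longrightarrow> n \<in> N \<Longrightarrow> c m n \<ge> 0" and y: "\<And>m. m \<in> M \<Longrightarrow> y m \<ge> 0"
    and B: "\<And>m. m \<in> M \<Longrightarrow> (\<Sum>n\<in>N. c m n powr r) \<le> B"
  shows "(\<Sum>n\<in>N. (\<Sum>m\<in>M. c m n * y m) powr r) \<le> B * (\<Sum>m\<in>M. y m) powr r"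
proof -
  define Y where "Y = (\<Sum>m\<in>M. y m)"
  have Y0: "Y \<ge> 0" unfolding Y_def using y by (intro sum_nonneg) auto
  have "(\<Sum>n\<in>N. (\<Sum>m\<in>M. c m n * y m) powr r) \<le> (\<Sum>n\<in>N. Y powr (r - 1) * (\<Sum>m\<in>M. y m * c m n powr r))"
  proof (rule sum_mono)
    fix n assume "n \<in> N"
    then have "(\<Sum>m\<in>M. y m * c m n) powr r \<le> Y powr (r - 1) * (\<Sum>m\<in>M. y m * c m n powr r)"
      unfolding Y_def using M r y c by (intro weighted_power_mean_le) auto
    then show "(\<Sum>m\<in>M. c m n * y m) powr r \<le> Y powr (r - 1) * (\<Sum>m\<in>M. y m * c m n powr r)"
      by (simp add: mult.commute)
  qed
  also have "\<dots> = Y powr (r - 1) * (\<Sum>m\<in>M. y m * (\<Sum>n\<in>N. c m n powr r))"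
    by (simp add: sum_distrib_left sum.swap[of _ N M])
  also have "\<dots> \<le> Y powr (r - 1) * (\<Sum>m\<in>M. y m * B)"
    using B y by (intro mult_left_mono sum_mono) auto
  also have "\<dots> = B * (Y powr (r - 1) * Y)"
    by (simp add: Y_def sum_distrib_left sum_distrib_right mult_ac)
  also have "\<dots> = B * Y powr r"
    using powr_add[of Y "r - 1" 1] Y0 by simp
  finally show ?thesis by (simp add: Y_def)
qed

text \<open>Hoelder in \<open>m\<close> against \<open>f\<close>, then the previous lemma with exponent \<open>q / p\<close> applied to \<open>g powr p\<close>.\<close>
lemma Schur_test_finite:
  fixes f g :: "'a \<Rightarrow> 'b \<Rightarrow> real" and x :: "'a \<Rightarrow> real"
  assumes M: "finite M" and N: "finite N" and p: "1 < p" and pq: "p \<le> q"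
    and f: "\<And>m n. m \<in> M \<Longrightarrow> n \<in> N \<Longrightarrow> f m n > 0"
    and g: "\<And>m n. m \<in> M \<Longrightarrow> n \<in> N \<Longrightarrow> g m n \<ge> 0"
    and x: "\<And>m. m \<in> M \<Longrightarrow> x m \<ge> 0"
    and A: "\<And>n. n \<in> N \<Longrightarrow> (\<Sum>m\<in>M. f m n powr (p / (p - 1))) \<le> A"
    and B: "\<And>m. m \<in> M \<Longrightarrow> (\<Sum>n\<in>N. g m n powr q) \<le> B"
  shows "(\<Sum>n\<in>N. (\<Sum>m\<in>M. f m n * g m n * x m) powr q)
    \<le> A powr ((p - 1) * (q / p)) * B * (\<Sum>m\<in>M. x m powr p) powr (q / p)"
proof -
  define r where "r = q / p"
  have r1: "1 \<le> r" using p pq by (simp add: r_def)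
  have row: "(\<Sum>m\<in>M. f m n * g m n * x m) powr q
      \<le> A powr ((p - 1) * r) * (\<Sum>m\<in>M. g m n powr p * x m powr p) powr r" if n: "n \<in> N" for n
  proof -
    define S where "S = (\<Sum>m\<in>M. f m n * (g m n * x m))"
    have S0: "S \<ge> 0" unfolding S_def using f g x n by (intro sum_nonneg mult_nonneg_nonneg) (auto intro: less_imp_le)
    have gx: "(\<Sum>m\<in>M. (g m n * x m) powr p) = (\<Sum>m\<in>M. g m n powr p * x m powr p)"
      using g x n by (intro sum.cong) (auto simp: powr_mult)
    have "S powr p \<le> (\<Sum>m\<in>M. f m n powr (p / (p - 1))) powr (p - 1) * (\<Sum>m\<in>M. g m n powr p * x m powr p)"
      unfolding S_def gx[symmetric] using M p f g x n by (intro Holder_sum_le) auto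
    also have "\<dots> \<le> A powr (p - 1) * (\<Sum>m\<in>M. g m n powr p * x m powr p)"
      using A[OF n] p by (intro mult_right_mono powr_mono2 sum_nonneg) auto
    finally have "(S powr p) powr r \<le> (A powr (p - 1) * (\<Sum>m\<in>M. g m n powr p * x m powr p)) powr r"
      using r1 by (intro powr_mono2) auto
    also have "\<dots> = A powr ((p - 1) * r) * (\<Sum>m\<in>M. g m n powr p * x m powr p) powr r"
      by (simp add: powr_mult powr_powr sum_nonneg)
    finally show ?thesis
      using S0 p by (simp add: S_def r_def powr_powr mult.assoc)
  qed
  have "(\<Sum>n\<in>N. (\<Sum>m\<in>M. f m n * g m n * x m) powr q)
      \<le> A powr ((p - 1) * r) * (\<Sum>n\<in>N. (\<Sum>m\<in>M. g m n powr p * x m powr p) powr r)"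
    unfolding sum_distrib_left using row by (intro sum_mono) auto
  also have "(\<Sum>n\<in>N. (\<Sum>m\<in>M. g m n powr p * x m powr p) powr r) \<le> B * (\<Sum>m\<in>M. x m powr p) powr r"
  proof (rule sum_powr_weighted_sum_le[OF M N r1])
    fix m assume "m \<in> M"
    then show "(\<Sum>n\<in>N. (g m n powr p) powr r) \<le> B"
      using B g p by (simp add: powr_powr r_def)
  qed auto
  finally show ?thesis
    by (simp add: r_def mult_left_mono mult.assoc)
qed

section \<open>Power kernels\<close>

definition pkernel :: "real \<Rightarrow> real \<Rightarrow> real \<Rightarrow> nat \<Rightarrow> nat \<Rightarrow> real" where
  "pkernel a b c m n = real m powr a * real n powr b * real (m + n) powr c"

lemma pkernel_pos: "1 \<le> m \<Longrightarrow> 1 \<le> n \<Longrightarrow> 0 < pkernel a b c m n"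
  by (simp add: pkernel_def)

lemma pkernel_nonneg: "0 \<le> pkernel a b c m n"
  by (simp add: pkernel_def)

lemma pkernel_mult: "pkernel a b c m n * pkernel a' b' c' m n = pkernel (a + a') (b + b') (c + c') m n"
  by (simp add: pkernel_def powr_add mult_ac)

lemma pkernel_powr: "pkernel a b c m n powr r = pkernel (a * r) (b * r) (c * r) m n"
  by (simp add: pkernel_def powr_mult powr_powr)

lemma pkernel_swap: "pkernel a b c m n = pkernel b a c n m"
  by (simp add: pkernel_def add.commute)

lemma hkernel_eq_pkernel: "hkernel lam \<mu> \<nu> = pkernel \<mu> \<nu> (-lam)"
  by (simp add: fun_eq_iff hkernel_def pkernel_def powr_minus divide_inverse)

lemma sum_pkernel_powr_le:
  fixes a b c r :: real
  assumes r: "r > 0" and "b > -1 / r" "b + c < -1 / r" "a + b + c + 1 / r \<le> 0"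
  obtains C where "C > 0" "\<And>m N. m \<ge> 1 \<Longrightarrow> (\<Sum>n\<in>{1..N}. pkernel a b c m n powr r) \<le> C"
proof -
  have "b * r > -1" "b * r + c * r < -1" and exp: "a * r + b * r + c * r + 1 \<le> 0"
    using assms by (simp_all add: field_simps)
  then obtain C where C: "C > 0" "\<And>m N. m \<ge> 1 \<Longrightarrow>
      (\<Sum>n\<in>{1..N}. real n powr (b * r) * real (m + n) powr (c * r)) \<le> C * real m powr (b * r + c * r + 1)"
    using sum_powr_mixed_le[of "b * r" "c * r"] by blast
  have "(\<Sum>n\<in>{1..N}. pkernel a b c m n powr r) \<le> C" if m: "m \<ge> 1" for m N
  proof -
    have "(\<Sum>n\<in>{1..N}. pkernel a b c m n powr r)
        = real m powr (a * r) * (\<Sum>n\<in>{1..N}. real n powr (b * r) * real (m + n) powr (c * r))"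
      unfolding pkernel_powr by (simp add: pkernel_def sum_distrib_left mult_ac)
    also have "\<dots> \<le> real m powr (a * r) * (C * real m powr (b * r + c * r + 1))"
      using C(2)[OF m] by (intro mult_left_mono) auto
    also have "\<dots> = C * real m powr (a * r + b * r + c * r + 1)"
      by (simp add: powr_add[symmetric] mult_ac add_ac)
    also have "\<dots> \<le> C * real m powr 0"
      using C(1) m exp by (intro mult_left_mono powr_mono) auto
    finally show ?thesis using m by simp
  qed
  then show ?thesis using C(1) that by blast
qed

lemma pkernel_section_bound_one:
  fixes q a b lam :: real
  assumes q: "1 \<le> q" and b: "b > -1 / q" and blam: "b - lam < -1 / q"
    and balance: "a + b - lam + 1 / q \<le> 0"
  obtains D where "D \<ge> 0"
    "\<And>M N x. (\<And>m. 0 \<le> x m) \<Longrightarrow>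
      (\<Sum>n\<in>{1..N}. (\<Sum>m\<in>{1..M}. pkernel a b (-lam) m n * x m) powr q) \<le> D * (\<Sum>m\<in>{1..M}. x m) powr q"
proof -
  have q0: "q > 0" using q by simp
  have exps: "b > -1 / q" "b + -lam < -1 / q" "a + b + -lam + 1 / q \<le> 0"
    using b blam balance by simp_all
  obtain B where B: "B > 0" "\<And>m N. m \<ge> 1 \<Longrightarrow> (\<Sum>n\<in>{1..N}. pkernel a b (-lam) m n powr q) \<le> B"
    by (fact sum_pkernel_powr_le[OF q0 exps])
  have bound: "(\<Sum>n\<in>{1..N}. (\<Sum>m\<in>{1..M}. pkernel a b (-lam) m n * x m) powr q)
      \<le> B * (\<Sum>m\<in>{1..M}. x m) powr q" if "\<And>m. 0 \<le> x m" for M N x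
    using that B(2) q by (intro sum_powr_weighted_sum_le) (auto simp: pkernel_nonneg)
  show ?thesis using B(1) by (intro that[of B] bound) auto
qed

lemma Schur_parameter_exists:
  fixes q b lam :: real
  assumes "b > -1 / q" "b - lam < -1 / q"
  obtains w where "0 < w" "lam / 2 - b - 1 / q < w" "w < lam / 2" "w < lam - b - 1 / q"
proof -
  have "max 0 (lam / 2 - b - 1 / q) < min (lam / 2) (lam - b - 1 / q)"
    using assms unfolding max_less_iff_conj min_less_iff_conj by (intro conjI) linarith+
  then obtain w where "max 0 (lam / 2 - b - 1 / q) < w" "w < min (lam / 2) (lam - b - 1 / q)"
    using dense by blast
  then have "0 < w" "lam / 2 - b - 1 / q < w" "w < lam / 2" "w < lam - b - 1 / q"
    by simp_all
  then show ?thesis by (rule that)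
qed

text \<open>The kernel is split as \<open>f * g\<close> with \<open>f = pkernel \<sigma> \<tau> (-lam/2)\<close>: the parameter \<open>w\<close> is chosen so
  that both Schur sums converge, and \<tau> so that the sums of \<open>f powr p'\<close> over \<open>m\<close> are bounded
  uniformly in \<open>n\<close>.\<close>
lemma pkernel_section_bound_gt_one:
  fixes p q a b lam :: real
  assumes p1: "1 < p" and pq: "p \<le> q" and b: "b > -1 / q" and blam: "b - lam < -1 / q"
    and balance: "a + b - lam + 1 - 1 / p + 1 / q \<le> 0"
  obtains D where "D \<ge> 0"
    "\<And>M N x. (\<And>m. 0 \<le> x m) \<Longrightarrow>
      (\<Sum>n\<in>{1..N}. (\<Sum>m\<in>{1..M}. pkernel a b (-lam) m n * x m) powr q)
        \<le> D * (\<Sum>m\<in>{1..M}. x m powr p) powr (q / p)"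
proof -
  define p' where "p' = p / (p - 1)"
  have p': "p' > 0" "1 / p' = 1 - 1 / p" using p1 by (auto simp: p'_def field_simps)
  have q: "q > 0" using p1 pq by simp
  obtain w where w: "0 < w" "lam / 2 - b - 1 / q < w" "w < lam / 2" "w < lam - b - 1 / q"
    using Schur_parameter_exists[OF b blam] by blast
  define h where "h = lam / 2"
  define \<sigma> where "\<sigma> = w - 1 / p'"
  define \<tau> where "\<tau> = h - w"
  have f_exps: "\<sigma> > -1 / p'" "\<sigma> + -h < -1 / p'" "\<tau> + \<sigma> + -h + 1 / p' \<le> 0"
    using w by (simp_all add: \<sigma>_def \<tau>_def h_def)
  obtain A where "A > 0"
    and A: "\<And>n M. n \<ge> 1 \<Longrightarrow> (\<Sum>m\<in>{1..M}. pkernel \<tau> \<sigma> (-h) n m powr p') \<le> A"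
    by (fact sum_pkernel_powr_le[OF p'(1) f_exps])
  have g_exps: "b - \<tau> > -1 / q" "b - \<tau> + -h < -1 / q" "a - \<sigma> + (b - \<tau>) + -h + 1 / q \<le> 0"
    using w balance p'(2) by (simp_all add: \<sigma>_def \<tau>_def h_def)
  obtain B where B: "B > 0"
    "\<And>m N. m \<ge> 1 \<Longrightarrow> (\<Sum>n\<in>{1..N}. pkernel (a - \<sigma>) (b - \<tau>) (-h) m n powr q) \<le> B"
    by (fact sum_pkernel_powr_le[OF q g_exps])
  have split: "pkernel a b (-lam) m n = pkernel \<sigma> \<tau> (-h) m n * pkernel (a - \<sigma>) (b - \<tau>) (-h) m n" for m n
    by (simp add: pkernel_mult h_def)
  have "(\<Sum>n\<in>{1..N}. (\<Sum>m\<in>{1..M}. pkernel a b (-lam) m n * x m) powr q)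
      \<le> A powr ((p - 1) * (q / p)) * B * (\<Sum>m\<in>{1..M}. x m powr p) powr (q / p)"
    if x: "\<And>m. 0 \<le> x m" for M N x
    unfolding split
  proof (rule Schur_test_finite[OF finite_atLeastAtMost finite_atLeastAtMost p1 pq])
    show "0 < pkernel \<sigma> \<tau> (-h) m n" if "m \<in> {1..M}" "n \<in> {1..N}" for m n
      using that by (simp add: pkernel_pos)
    show "0 \<le> pkernel (a - \<sigma>) (b - \<tau>) (-h) m n" for m n
      by (rule pkernel_nonneg)
    show "0 \<le> x m" for m
      by (rule x)
    show "(\<Sum>m\<in>{1..M}. pkernel \<sigma> \<tau> (-h) m n powr (p / (p - 1))) \<le> A" if "n \<in> {1..N}" for n
      using that A[of n M] by (simp add: pkernel_swap[of \<sigma>] p'_def)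
    show "(\<Sum>n\<in>{1..N}. pkernel (a - \<sigma>) (b - \<tau>) (-h) m n powr q) \<le> B" if "m \<in> {1..M}" for m
      using that B(2)[of m N] by simp
  qed
  with B(1) show ?thesis by (intro that[of "A powr ((p - 1) * (q / p)) * B"]) auto
qed

lemma pkernel_section_bound:
  fixes p q a b lam :: real
  assumes p: "1 \<le> p" and pq: "p \<le> q" and b: "b > -1 / q" and blam: "b - lam < -1 / q"
    and balance: "a + b - lam + 1 - 1 / p + 1 / q \<le> 0"
  obtains D where "D \<ge> 0"
    "\<And>M N x. (\<And>m. 0 \<le> x m) \<Longrightarrow>
      (\<Sum>n\<in>{1..N}. (\<Sum>m\<in>{1..M}. pkernel a b (-lam) m n * x m) powr q)
        \<le> D * (\<Sum>m\<in>{1..M}. x m powr p) powr (q / p)"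
proof (cases "p = 1")
  case True
  have q: "1 \<le> q" and balance_one: "a + b - lam + 1 / q \<le> 0"
    using pq balance True by simp_all
  obtain D where "D \<ge> 0" and D: "\<And>M N x. (\<And>m. 0 \<le> x m) \<Longrightarrow>
      (\<Sum>n\<in>{1..N}. (\<Sum>m\<in>{1..M}. pkernel a b (-lam) m n * x m) powr q) \<le> D * (\<Sum>m\<in>{1..M}. x m) powr q"
    by (fact pkernel_section_bound_one[OF q b blam balance_one])
  have "(\<Sum>n\<in>{1..N}. (\<Sum>m\<in>{1..M}. pkernel a b (-lam) m n * x m) powr q)
      \<le> D * (\<Sum>m\<in>{1..M}. x m powr p) powr (q / p)" if x: "\<And>m. 0 \<le> x m" for M N x
    using D[OF x] x True by simp
  with \<open>D \<ge> 0\<close> show ?thesis by (rule that)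
next
  case False
  with p have "1 < p" by simp
  obtain D where "D \<ge> 0" and D: "\<And>M N x. (\<And>m. 0 \<le> x m) \<Longrightarrow>
      (\<Sum>n\<in>{1..N}. (\<Sum>m\<in>{1..M}. pkernel a b (-lam) m n * x m) powr q)
        \<le> D * (\<Sum>m\<in>{1..M}. x m powr p) powr (q / p)"
    by (fact pkernel_section_bound_gt_one[OF \<open>1 < p\<close> pq b blam balance])
  then show ?thesis by (rule that)
qed

section \<open>Sufficiency\<close>

lemma hilbert_section_bound:
  fixes p q lam \<mu> \<nu> \<alpha> \<beta> :: real
  assumes p: "1 \<le> p" and pq: "p \<le> q" and H: "\<beta> + 1 > - q * \<nu>"
    and balance: "lam \<ge> \<mu> + \<nu> + 1 + (\<beta> + 1) / q - (\<alpha> + 1) / p" and decay: "\<beta> + 1 < q * (lam - \<nu>)"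
  obtains D where "D \<ge> 0"
    "\<And>M N u. (\<Sum>n\<in>{1..N}. real n powr \<beta> * (\<Sum>m\<in>{1..M}. hkernel lam \<mu> \<nu> m n * \<bar>u m\<bar>) powr q)
       \<le> D * (\<Sum>m\<in>{1..M}. real m powr \<alpha> * \<bar>u m\<bar> powr p) powr (q / p)"
proof -
  have q: "q > 0" and p0: "p > 0" using p pq by auto
  define a where "a = \<mu> - \<alpha> / p"
  define b where "b = \<nu> + \<beta> / q"
  have "b > -1 / q"
    using H q by (simp add: b_def field_simps)
  moreover have "(b - lam) * q < -1"
    using decay q by (simp add: b_def algebra_simps)
  then have "b - lam < -1 / q"
    using pos_less_divide_eq[of q "b - lam" "-1"] q by simp
  moreover have "a + b - lam + 1 - 1 / p + 1 / q \<le> 0"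
    using balance unfolding a_def b_def add_divide_distrib by linarith
  ultimately obtain D where D: "D \<ge> 0" "\<And>M N x. (\<And>m. 0 \<le> x m) \<Longrightarrow>
      (\<Sum>n\<in>{1..N}. (\<Sum>m\<in>{1..M}. pkernel a b (-lam) m n * x m) powr q)
        \<le> D * (\<Sum>m\<in>{1..M}. x m powr p) powr (q / p)"
    using pkernel_section_bound[OF p pq] by blast
  have "(\<Sum>n\<in>{1..N}. real n powr \<beta> * (\<Sum>m\<in>{1..M}. hkernel lam \<mu> \<nu> m n * \<bar>u m\<bar>) powr q)
      \<le> D * (\<Sum>m\<in>{1..M}. real m powr \<alpha> * \<bar>u m\<bar> powr p) powr (q / p)" for M N u
  proof -
    define x where "x m = real m powr (\<alpha> / p) * \<bar>u m\<bar>" for m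
    have "pkernel a b (-lam) m n * x m = real n powr (\<beta> / q) * (hkernel lam \<mu> \<nu> m n * \<bar>u m\<bar>)" for m n
      by (simp add: hkernel_eq_pkernel pkernel_def x_def a_def b_def powr_add[symmetric] mult_ac)
    then have "(\<Sum>m\<in>{1..M}. pkernel a b (-lam) m n * x m)
        = real n powr (\<beta> / q) * (\<Sum>m\<in>{1..M}. hkernel lam \<mu> \<nu> m n * \<bar>u m\<bar>)" for n
      by (simp add: sum_distrib_left)
    moreover have "0 \<le> (\<Sum>m\<in>{1..M}. hkernel lam \<mu> \<nu> m n * \<bar>u m\<bar>)" for n
      by (simp add: hkernel_eq_pkernel pkernel_nonneg sum_nonneg)
    ultimately have "(\<Sum>m\<in>{1..M}. pkernel a b (-lam) m n * x m) powr q
        = real n powr \<beta> * (\<Sum>m\<in>{1..M}. hkernel lam \<mu> \<nu> m n * \<bar>u m\<bar>) powr q" for n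
      using q by (simp add: powr_mult powr_powr)
    moreover have "x m powr p = real m powr \<alpha> * \<bar>u m\<bar> powr p" for m
      using p0 by (simp add: x_def powr_mult powr_powr)
    moreover have "\<And>m. 0 \<le> x m" by (simp add: x_def)
    ultimately show ?thesis using D(2)[of x M N] by simp
  qed
  with D(1) show ?thesis using that by blast
qed

lemma section_bound_limit:
  fixes c :: "nat \<Rightarrow> nat \<Rightarrow> real" and \<beta> q R :: real
  assumes q: "0 < q" and c: "\<And>m n. 0 \<le> c m n"
    and bound: "\<And>M N. (\<Sum>n\<in>{1..N}. real n powr \<beta> * (\<Sum>m\<in>{1..M}. c m n) powr q) \<le> R"
  shows "\<And>n. 1 \<le> n \<Longrightarrow> summable (\<lambda>m. c (Suc m) n)"
    and "summable (\<lambda>n. real (Suc n) powr \<beta> * (\<Sum>m. c (Suc m) (Suc n)) powr q)"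
    and "(\<Sum>n. real (Suc n) powr \<beta> * (\<Sum>m. c (Suc m) (Suc n)) powr q) \<le> R"
proof -
  define P where "P M n = (\<Sum>m\<in>{1..M}. c m n)" for M n
  define F where "F n = (\<Sum>m. c (Suc m) n)" for n
  have P0: "0 \<le> P M n" for M n unfolding P_def using c by (intro sum_nonneg) auto
  have P_eq: "P M n = (\<Sum>m<M. c (Suc m) n)" for M n
    by (simp add: P_def sum.atLeast1_atMost_eq)
  have P_le: "P M n \<le> (R / real n powr \<beta>) powr (1 / q)" if n: "1 \<le> n" for M n
  proof -
    have "real n powr \<beta> * P M n powr q \<le> (\<Sum>k\<in>{1..n}. real k powr \<beta> * P M k powr q)"
      using n by (intro member_le_sum) auto
    also have "\<dots> \<le> R" using bound[of M n] by (simp add: P_def)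
    finally have "P M n powr q \<le> R / real n powr \<beta>"
      using n by (simp add: pos_le_divide_eq mult.commute)
    then have "(P M n powr q) powr (1 / q) \<le> (R / real n powr \<beta>) powr (1 / q)"
      using q by (intro powr_mono2) auto
    then show ?thesis using q P0[of M n] by (simp add: powr_powr)
  qed
  show row: "summable (\<lambda>m. c (Suc m) n)" if "1 \<le> n" for n
    using c P_le[OF that] by (intro summableI_nonneg_bounded) (auto simp: P_eq)
  have finite_le: "(\<Sum>n\<in>{1..N}. real n powr \<beta> * F n powr q) \<le> R" for N
  proof (rule LIMSEQ_le_const2)
    have "(\<lambda>M. P M n) \<longlonglongrightarrow> F n" if "1 \<le> n" for n
      unfolding P_eq F_def using row[OF that] by (rule summable_LIMSEQ)
    then show "(\<lambda>M. \<Sum>n\<in>{1..N}. real n powr \<beta> * P M n powr q) \<longlonglongrightarrow> (\<Sum>n\<in>{1..N}. real n powr \<beta> * F n powr q)"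
      using q P0 by (intro tendsto_intros tendsto_powr2) auto
    show "\<exists>N0. \<forall>M\<ge>N0. (\<Sum>n\<in>{1..N}. real n powr \<beta> * P M n powr q) \<le> R"
      using bound by (auto simp: P_def)
  qed
  have partial_le: "(\<Sum>n<N. real (Suc n) powr \<beta> * F (Suc n) powr q) \<le> R" for N
    using finite_le[of N] by (simp add: sum.atLeast1_atMost_eq)
  show "summable (\<lambda>n. real (Suc n) powr \<beta> * (\<Sum>m. c (Suc m) (Suc n)) powr q)"
    using partial_le unfolding F_def by (intro summableI_nonneg_bounded) auto
  then show "(\<Sum>n. real (Suc n) powr \<beta> * (\<Sum>m. c (Suc m) (Suc n)) powr q) \<le> R"
    using partial_le unfolding F_def by (intro suminf_le_const) auto
qed

lemma kernel_operator_bounded_of_section_bound: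
  fixes k :: "nat \<Rightarrow> nat \<Rightarrow> real" and u :: "nat \<Rightarrow> real" and p q \<alpha> \<beta> D :: real
  assumes p: "0 < p" and q: "0 < q" and D: "0 \<le> D" and k: "\<And>m n. 0 \<le> k m n"
    and est: "\<And>M N. (\<Sum>n\<in>{1..N}. real n powr \<beta> * (\<Sum>m\<in>{1..M}. k m n * \<bar>u m\<bar>) powr q)
      \<le> D * (\<Sum>m\<in>{1..M}. real m powr \<alpha> * \<bar>u m\<bar> powr p) powr (q / p)"
    and u: "in_lw p \<alpha> u"
  defines "T \<equiv> \<lambda>n. \<Sum>m. k (Suc m) n * u (Suc m)"
  shows "\<forall>n\<ge>1. summable (\<lambda>m. k (Suc m) n * u (Suc m))"
    and "in_lw q \<beta> T"
    and "lw_norm q \<beta> T \<le> D powr (1 / q) * lw_norm p \<alpha> u"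
proof -
  define S where "S = (\<Sum>m. real (Suc m) powr \<alpha> * \<bar>u (Suc m)\<bar> powr p)"
  have "summable (\<lambda>m. real (Suc m) powr \<alpha> * \<bar>u (Suc m)\<bar> powr p)"
    using u by (simp add: in_lw_def)
  then have S0: "0 \<le> S" and partial_le: "\<And>M. (\<Sum>m\<in>{1..M}. real m powr \<alpha> * \<bar>u m\<bar> powr p) \<le> S"
    unfolding S_def by (auto intro!: suminf_nonneg sum_le_suminf simp: sum.atLeast1_atMost_eq)
  define R where "R = D * S powr (q / p)"
  have bound: "(\<Sum>n\<in>{1..N}. real n powr \<beta> * (\<Sum>m\<in>{1..M}. k m n * \<bar>u m\<bar>) powr q) \<le> R" for M N
  proof -
    have "(\<Sum>m\<in>{1..M}. real m powr \<alpha> * \<bar>u m\<bar> powr p) powr (q / p) \<le> S powr (q / p)"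
      using partial_le p q by (intro powr_mono2 sum_nonneg) auto
    then show ?thesis
      unfolding R_def using est[of M N] D by (meson mult_left_mono order_trans)
  qed
  have c: "0 \<le> k m n * \<bar>u m\<bar>" for m n using k by simp
  note rows = section_bound_limit(1)[OF q c bound]
  show "\<forall>n\<ge>1. summable (\<lambda>m. k (Suc m) n * u (Suc m))"
    using rows k by (auto intro: summable_rabs_cancel simp: abs_mult)
  define g where "g n = real (Suc n) powr \<beta> * \<bar>T (Suc n)\<bar> powr q" for n
  have g_le: "norm (g n) \<le> real (Suc n) powr \<beta> * (\<Sum>m. k (Suc m) (Suc n) * \<bar>u (Suc m)\<bar>) powr q" for n
  proof -
    have "\<bar>T (Suc n)\<bar> \<le> (\<Sum>m. \<bar>k (Suc m) (Suc n) * u (Suc m)\<bar>)"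
      unfolding T_def using rows[of "Suc n"] k by (intro summable_rabs) (simp add: abs_mult)
    then show ?thesis
      unfolding g_def using q k by (auto intro!: mult_left_mono powr_mono2 simp: abs_mult)
  qed
  have "summable g"
    by (rule summable_comparison_test'[OF section_bound_limit(2)[OF q c bound] g_le])
  then show "in_lw q \<beta> T"
    unfolding in_lw_def g_def[abs_def] .
  have "suminf g \<le> (\<Sum>n. real (Suc n) powr \<beta> * (\<Sum>m. k (Suc m) (Suc n) * \<bar>u (Suc m)\<bar>) powr q)"
    using \<open>summable g\<close> section_bound_limit(2)[OF q c bound] g_le
    by (intro suminf_le) (auto intro: order_trans[OF abs_ge_self])
  also have "\<dots> \<le> R"
    by (rule section_bound_limit(3)[OF q c bound])
  finally have "suminf g powr (1 / q) \<le> R powr (1 / q)"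
    using \<open>summable g\<close> q by (intro powr_mono2 suminf_nonneg) (auto simp: g_def)
  also have "\<dots> = D powr (1 / q) * S powr (1 / p)"
    unfolding R_def using D S0 q by (simp add: powr_mult powr_powr)
  finally show "lw_norm q \<beta> T \<le> D powr (1 / q) * lw_norm p \<alpha> u"
    unfolding lw_norm_def g_def[abs_def] S_def .
qed

lemma hilbert_bounded_if:
  fixes p q lam \<mu> \<nu> \<alpha> \<beta> :: real
  assumes "1 \<le> p" and "p \<le> q" and "\<beta> + 1 > - q * \<nu>"
    and "lam \<ge> \<mu> + \<nu> + 1 + (\<beta> + 1) / q - (\<alpha> + 1) / p" and "\<beta> + 1 < q * (lam - \<nu>)"
  shows "hilbert_bounded lam \<mu> \<nu> p \<alpha> q \<beta>"
proof -
  obtain D where D: "D \<ge> 0"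
    "\<And>M N u. (\<Sum>n\<in>{1..N}. real n powr \<beta> * (\<Sum>m\<in>{1..M}. hkernel lam \<mu> \<nu> m n * \<bar>u m\<bar>) powr q)
       \<le> D * (\<Sum>m\<in>{1..M}. real m powr \<alpha> * \<bar>u m\<bar> powr p) powr (q / p)"
    by (fact hilbert_section_bound[OF assms])
  have pq: "0 < p" "0 < q" using assms(1,2) by auto
  have k: "0 \<le> hkernel lam \<mu> \<nu> m n" for m n
    by (simp add: hkernel_eq_pkernel pkernel_nonneg)
  note op_bounded = kernel_operator_bounded_of_section_bound[OF pq D(1) k D(2)]
  show ?thesis
    unfolding hilbert_bounded_def hilbert_op_def[abs_def]
    using op_bounded by (intro conjI allI impI exI[of _ "D powr (1 / q)"]) auto
qed

section \<open>Necessity\<close>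

lemma in_lw_powr:
  fixes p \<alpha> s :: real
  assumes p: "p > 0" and s: "s > (\<alpha> + 1) / p"
  shows "in_lw p \<alpha> (\<lambda>m. real m powr (-s))"
proof -
  have "\<alpha> - s * p < -1" using s p by (simp add: field_simps)
  then have "summable (\<lambda>m. real m powr (\<alpha> - s * p))"
    by (simp add: summable_real_powr_iff)
  then have "summable (\<lambda>m. real (Suc m) powr (\<alpha> - s * p))"
    by (subst summable_Suc_iff)
  moreover have "real (Suc m) powr \<alpha> * \<bar>real (Suc m) powr (-s)\<bar> powr p = real (Suc m) powr (\<alpha> - s * p)" for m
    by (simp add: powr_powr powr_add[symmetric])
  ultimately show ?thesis unfolding in_lw_def by simp
qed

lemma exponent_lt_of_summable_lower_bound:
  fixes T :: "nat \<Rightarrow> real" and q c E \<beta> :: real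
  assumes q: "q > 0" and c: "c > 0" and low: "\<And>n. n \<ge> 1 \<Longrightarrow> c * real n powr E \<le> T n"
    and sm: "summable (\<lambda>n. real (Suc n) powr \<beta> * \<bar>T (Suc n)\<bar> powr q)"
  shows "\<beta> + q * E < -1"
proof -
  have "norm (c powr q * real (Suc n) powr (\<beta> + q * E)) \<le> real (Suc n) powr \<beta> * \<bar>T (Suc n)\<bar> powr q" for n
  proof -
    have "c powr q * real (Suc n) powr (\<beta> + q * E) = real (Suc n) powr \<beta> * (c * real (Suc n) powr E) powr q"
      using c by (simp add: powr_mult powr_powr powr_add mult_ac)
    also have "\<dots> \<le> real (Suc n) powr \<beta> * \<bar>T (Suc n)\<bar> powr q"
      using low[of "Suc n"] c q by (intro mult_left_mono powr_mono2) auto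
    finally show ?thesis by simp
  qed
  then have "summable (\<lambda>n. c powr q * real (Suc n) powr (\<beta> + q * E))"
    by (rule summable_comparison_test'[OF sm])
  then have "summable (\<lambda>n. real (Suc n) powr (\<beta> + q * E))"
    using c by simp
  then have "summable (\<lambda>n. real n powr (\<beta> + q * E))"
    by (subst (asm) summable_Suc_iff)
  then show ?thesis by (simp add: summable_real_powr_iff)
qed

lemma sum_le_hilbert_op_powr:
  assumes "summable (\<lambda>m. hkernel lam \<mu> \<nu> (Suc m) n * real (Suc m) powr (-s))" and "finite I"
  shows "(\<Sum>m\<in>I. hkernel lam \<mu> \<nu> (Suc m) n * real (Suc m) powr (-s))
    \<le> hilbert_op lam \<mu> \<nu> (\<lambda>m. real m powr (-s)) n"
  unfolding hilbert_op_def using assms by (intro sum_le_suminf) (auto simp: hkernel_def)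

lemma hilbert_op_powr_ge_first:
  assumes sm: "summable (\<lambda>m. hkernel lam \<mu> \<nu> (Suc m) n * real (Suc m) powr (-s))" and n: "1 \<le> n"
  shows "2 powr (-\<bar>lam\<bar>) * real n powr (\<nu> - lam) \<le> hilbert_op lam \<mu> \<nu> (\<lambda>m. real m powr (-s)) n"
proof -
  have "2 powr (-\<bar>lam\<bar>) * real n powr (\<nu> - lam) = real n powr \<nu> * (2 powr (-\<bar>-lam\<bar>) * real n powr (-lam))"
    by (simp add: powr_add[symmetric] mult_ac)
  also have "\<dots> \<le> real n powr \<nu> * real (1 + n) powr (-lam)"
    using n by (intro mult_left_mono powr_ge_of_comparable) auto
  also have "\<dots> = (\<Sum>m\<in>{0}. hkernel lam \<mu> \<nu> (Suc m) n * real (Suc m) powr (-s))"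
    by (simp add: hkernel_def powr_minus divide_inverse)
  also have "\<dots> \<le> hilbert_op lam \<mu> \<nu> (\<lambda>m. real m powr (-s)) n"
    using sm by (rule sum_le_hilbert_op_powr) simp
  finally show ?thesis .
qed

text \<open>The \<open>n\<close> terms with \<open>n \<le> m < 2 n\<close>, each of size about \<open>n^(\<mu> - s + \<nu> - lam)\<close>.\<close>
lemma hilbert_op_powr_ge_block:
  assumes sm: "summable (\<lambda>m. hkernel lam \<mu> \<nu> (Suc m) n * real (Suc m) powr (-s))" and n: "1 \<le> n"
  shows "2 powr (-\<bar>\<mu> - s\<bar>) * 3 powr (-\<bar>lam\<bar>) * real n powr (\<mu> - s + \<nu> - lam + 1)
    \<le> hilbert_op lam \<mu> \<nu> (\<lambda>m. real m powr (-s)) n"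
proof -
  define c where "c = 2 powr (-\<bar>\<mu> - s\<bar>) * 3 powr (-\<bar>-lam\<bar>)"
  define I where "I = {n - 1..<2 * n - 1}"
  have term_ge: "c * real n powr (\<mu> - s + \<nu> - lam) \<le> hkernel lam \<mu> \<nu> (Suc m) n * real (Suc m) powr (-s)"
    if "m \<in> I" for m
  proof -
    have m: "n \<le> Suc m" "Suc m \<le> 2 * n" using that n by (auto simp: I_def)
    have "c * real n powr (\<mu> - s + \<nu> - lam)
        = (2 powr (-\<bar>\<mu> - s\<bar>) * real n powr (\<mu> - s)) * (3 powr (-\<bar>-lam\<bar>) * real n powr (-lam)) * real n powr \<nu>"
    proof -
      have "\<mu> - s + \<nu> - lam = (\<mu> - s) + (-lam) + \<nu>" by simp
      then show ?thesis by (simp only: powr_add) (simp add: c_def mult_ac)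
    qed
    also have "\<dots> \<le> real (Suc m) powr (\<mu> - s) * real (Suc m + n) powr (-lam) * real n powr \<nu>"
      using m n by (intro mult_right_mono mult_mono powr_ge_of_comparable) auto
    also have "\<dots> = hkernel lam \<mu> \<nu> (Suc m) n * real (Suc m) powr (-s)"
      by (simp add: hkernel_def powr_diff powr_minus divide_inverse mult_ac)
    finally show ?thesis .
  qed
  have "c * real n powr (\<mu> - s + \<nu> - lam + 1) = (\<Sum>m\<in>I. c * real n powr (\<mu> - s + \<nu> - lam))"
    using n by (simp add: I_def powr_add)
  also have "\<dots> \<le> (\<Sum>m\<in>I. hkernel lam \<mu> \<nu> (Suc m) n * real (Suc m) powr (-s))"
    using term_ge by (rule sum_mono)
  also have "\<dots> \<le> hilbert_op lam \<mu> \<nu> (\<lambda>m. real m powr (-s)) n"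
    using sm by (rule sum_le_hilbert_op_powr) (simp add: I_def)
  finally show ?thesis by (simp add: c_def)
qed

lemma hilbert_bounded_only_if:
  fixes p q lam \<mu> \<nu> \<alpha> \<beta> :: real
  assumes p: "0 < p" and q: "0 < q" and bounded: "hilbert_bounded lam \<mu> \<nu> p \<alpha> q \<beta>"
  shows "lam \<ge> \<mu> + \<nu> + 1 + (\<beta> + 1) / q - (\<alpha> + 1) / p \<and> \<beta> + 1 < q * (lam - \<nu>)"
proof -
  have maps: "(\<forall>n\<ge>1. summable (\<lambda>m. hkernel lam \<mu> \<nu> (Suc m) n * a (Suc m))) \<and> in_lw q \<beta> (hilbert_op lam \<mu> \<nu> a)"
    if "in_lw p \<alpha> a" for a
    using bounded that unfolding hilbert_bounded_def by blast
  have rows: "\<And>n. 1 \<le> n \<Longrightarrow> summable (\<lambda>m. hkernel lam \<mu> \<nu> (Suc m) n * real (Suc m) powr (-s))"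
    and image: "summable (\<lambda>n. real (Suc n) powr \<beta> * \<bar>hilbert_op lam \<mu> \<nu> (\<lambda>m. real m powr (-s)) (Suc n)\<bar> powr q)"
    if "(\<alpha> + 1) / p < s" for s
    using maps[OF in_lw_powr[OF p that]] unfolding in_lw_def by auto
  define s1 where "s1 = (\<alpha> + 1) / p + 1"
  have s1: "(\<alpha> + 1) / p < s1" by (simp add: s1_def)
  have "\<beta> + q * (\<nu> - lam) < -1"
    using rows[OF s1] image[OF s1]
    by (intro exponent_lt_of_summable_lower_bound[OF q _ hilbert_op_powr_ge_first[where \<mu> = \<mu> and s = s1]]) auto
  then have decay: "\<beta> + 1 < q * (lam - \<nu>)"
    by (simp add: algebra_simps)
  have "\<mu> + \<nu> + 1 + (\<beta> + 1) / q - lam < s" if s: "(\<alpha> + 1) / p < s" for s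
  proof -
    have "\<beta> + q * (\<mu> - s + \<nu> - lam + 1) < -1"
      using rows[OF s] image[OF s]
      by (intro exponent_lt_of_summable_lower_bound[OF q _ hilbert_op_powr_ge_block[where s = s]]) auto
    then have "(\<beta> + 1) / q + (\<mu> - s + \<nu> - lam + 1) < 0"
      using q by (simp add: field_simps)
    then show ?thesis by simp
  qed
  then have "\<mu> + \<nu> + 1 + (\<beta> + 1) / q - lam \<le> (\<alpha> + 1) / p"
    by (meson dense_ge less_imp_le)
  with decay show ?thesis by simp
qed

theorem theorem1p6:
  fixes p q lam \<mu> \<nu> \<alpha> \<beta> :: real
  assumes "1 \<le> p" and "p \<le> q"
    and "\<beta> + 1 > - q * \<nu>"
  shows "hilbert_bounded lam \<mu> \<nu> p \<alpha> q \<beta> \<longleftrightarrow>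
    (lam \<ge> \<mu> + \<nu> + 1 + (\<beta> + 1) / q - (\<alpha> + 1) / p \<and> \<beta> + 1 < q * (lam - \<nu>))"
proof
  assume "hilbert_bounded lam \<mu> \<nu> p \<alpha> q \<beta>"
  moreover have "0 < p" "0 < q" using assms(1,2) by auto
  ultimately show "lam \<ge> \<mu> + \<nu> + 1 + (\<beta> + 1) / q - (\<alpha> + 1) / p \<and> \<beta> + 1 < q * (lam - \<nu>)"
    using hilbert_bounded_only_if by blast
next
  assume "lam \<ge> \<mu> + \<nu> + 1 + (\<beta> + 1) / q - (\<alpha> + 1) / p \<and> \<beta> + 1 < q * (lam - \<nu>)"
  then show "hilbert_bounded lam \<mu> \<nu> p \<alpha> q \<beta>"
    using hilbert_bounded_if[OF assms] by blast
qed

end
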